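(* Let $h\ge0$ and $i\le h$ be integers. Let $\Phi(z)=\sum_{n\ge0}c_nz^n$, where $c_n$ is the number of Deutsch paths of $n$ steps from $(0,0)$ to $(n,i)$ that never go above level $h$, with no lower boundary. Let $v=v(z)$ be the power series with $v(0)=0$ satisfying $z=\frac{v}{1+v+v^2}$. Then $$\Phi(z)=\frac{(1+v)^{-i-2}\,v\,(1-v^{h+1})(1+v+v^2)}{1-v}\quad\text{for } i<0,$$ $$\Phi(z)=\frac{v^{i}(1-v^{2-i+h})(1+v+v^2)}{(1-v)(1+v)^{i+2}}\quad\text{for } 0\le i\le h.$$
   Context: A Deutsch path is a lattice path whose steps are up-steps $(1,1)$ and down-steps $(1,-k)$ for any integer $k\ge1$. The series $v$ is given explicitly by $v=\frac{1-z-\sqrt{1-2z-3z^2}}{2z}$. *)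

theory Defs
  imports "HOL-Computational_Algebra.Formal_Power_Series"
begin

text \<open>A Deutsch path of n steps is encoded by its list of step heights:
  each step is an up-step (+1) or a down-step (-k) with k \<ge> 1.
  The path starts at level 0; its heights are the prefix sums.\<close>

definition deutsch_step :: "int \<Rightarrow> bool" where
  "deutsch_step s \<longleftrightarrow> s = 1 \<or> s \<le> -1"

definition deutsch_paths_upper :: "int \<Rightarrow> int \<Rightarrow> nat \<Rightarrow> int list set" where
  "deutsch_paths_upper h i n =
     {ss. length ss = n \<and> (\<forall>s\<in>set ss. deutsch_step s) \<and> sum_list ss = i
          \<and> (\<forall>k\<le>n. sum_list (take k ss) \<le> h)}"

end

theory Submission
  imports Defs
begin

text \<open>
  Removing the last step of a path shows that the numbers c_n(j) of paths of length n ending at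
  level j \<le> h satisfy c_0(j) = [j = 0] and c_{n+1}(j) = c_n(j - 1) + \<Sum>l=j+1..h. c_n(l).
  Hence any family of power series obeying G_j = [j = 0] + z (G_{j-1} + \<Sum>l=j+1..h. G_l)
  has the c_n(j) as coefficients. We take G_j = S_j - S_{j+1} for explicit series S_m in v with
  S_{h+1} = 0: the sum then telescopes to S_{j+1}, and the remaining three-term relation between
  S_{j-1}, S_j and S_{j+1} follows from z (1 + v + v^2) = v.
\<close>

lemma deutsch_paths_upper_eq_empty:
  assumes "h < j"
  shows "deutsch_paths_upper h j n = {}"
proof -
  have "sum_list ss \<le> h" if "ss \<in> deutsch_paths_upper h j n" for ss
    using that by (auto simp: deutsch_paths_upper_def dest: spec[of _ n])
  then show ?thesis
    using assms by (fastforce simp: deutsch_paths_upper_def)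
qed

lemma deutsch_paths_upper_0:
  assumes "h \<ge> 0"
  shows "deutsch_paths_upper h j 0 = (if j = 0 then {[]} else {})"
  using assms by (auto simp: deutsch_paths_upper_def)

lemma snoc_in_deutsch_paths_upper_iff:
  "ss @ [s] \<in> deutsch_paths_upper h j (Suc n) \<longleftrightarrow>
     ss \<in> deutsch_paths_upper h (j - s) n \<and> deutsch_step s \<and> j \<le> h"
proof -
  have "(\<forall>k\<le>Suc n. sum_list (take k (ss @ [s])) \<le> h) \<longleftrightarrow>
          (\<forall>k\<le>n. sum_list (take k ss) \<le> h) \<and> sum_list ss + s \<le> h"
    if "length ss = n"
    using that by (auto simp: le_Suc_eq)
  then show ?thesis
    by (auto simp: deutsch_paths_upper_def)
qed

lemma deutsch_paths_upper_Suc: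
  assumes "j \<le> h"
  shows "deutsch_paths_upper h j (Suc n) =
           (\<Union>l\<in>insert (j - 1) {j+1..h}. (\<lambda>ss. ss @ [j - l]) ` deutsch_paths_upper h l n)"
proof (intro set_eqI iffI)
  fix xs
  assume xs: "xs \<in> deutsch_paths_upper h j (Suc n)"
  then have "length xs = Suc n"
    by (simp add: deutsch_paths_upper_def)
  then obtain ss s where xs_eq: "xs = ss @ [s]"
    by (metis length_Suc_conv_rev)
  with xs have ss: "ss \<in> deutsch_paths_upper h (j - s) n" and step: "deutsch_step s"
    by (simp_all add: snoc_in_deutsch_paths_upper_iff)
  have "j - s \<le> h"
    using ss by (metis deutsch_paths_upper_eq_empty empty_iff not_le)
  with step have l: "j - s \<in> insert (j - 1) {j+1..h}"
    by (auto simp: deutsch_step_def)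
  have "xs = ss @ [j - (j - s)]"
    using xs_eq by simp
  with ss l show "xs \<in> (\<Union>l\<in>insert (j - 1) {j+1..h}. (\<lambda>ss. ss @ [j - l]) ` deutsch_paths_upper h l n)"
    by blast
next
  fix xs
  assume "xs \<in> (\<Union>l\<in>insert (j - 1) {j+1..h}. (\<lambda>ss. ss @ [j - l]) ` deutsch_paths_upper h l n)"
  then obtain l ss where l: "l \<in> insert (j - 1) {j+1..h}" and ss: "ss \<in> deutsch_paths_upper h l n"
    and xs_eq: "xs = ss @ [j - l]"
    by blast
  from l have "deutsch_step (j - l)"
    by (auto simp: deutsch_step_def)
  with assms ss show "xs \<in> deutsch_paths_upper h j (Suc n)"
    unfolding xs_eq by (simp add: snoc_in_deutsch_paths_upper_iff)
qed

lemma finite_deutsch_paths_upper: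
  assumes "h \<ge> 0"
  shows "finite (deutsch_paths_upper h j n)"
proof (induction n arbitrary: j)
  case 0
  show ?case
    using assms by (simp add: deutsch_paths_upper_0)
next
  case (Suc n)
  then show ?case
    by (cases "j \<le> h") (simp_all add: deutsch_paths_upper_Suc deutsch_paths_upper_eq_empty)
qed

lemma card_deutsch_paths_upper_Suc:
  assumes "h \<ge> 0" and "j \<le> h"
  shows "card (deutsch_paths_upper h j (Suc n)) =
           card (deutsch_paths_upper h (j - 1) n) + (\<Sum>l=j+1..h. card (deutsch_paths_upper h l n))"
proof -
  have "card (deutsch_paths_upper h j (Suc n)) =
          (\<Sum>l\<in>insert (j - 1) {j+1..h}. card ((\<lambda>ss. ss @ [j - l]) ` deutsch_paths_upper h l n))"
    unfolding deutsch_paths_upper_Suc[OF assms(2)]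
    by (rule card_UN_disjoint) (auto simp: finite_deutsch_paths_upper[OF assms(1)])
  also have "\<dots> = (\<Sum>l\<in>insert (j - 1) {j+1..h}. card (deutsch_paths_upper h l n))"
    by (intro sum.cong refl card_image) (simp add: inj_on_def)
  finally show ?thesis
    by simp
qed

lemma fps_nth_eq_card_deutsch_paths_upper:
  fixes F :: "int \<Rightarrow> 'a::comm_semiring_1 fps"
  assumes "h \<ge> 0"
    and F: "\<And>j. j \<le> h \<Longrightarrow> F j = (if j = 0 then 1 else 0) + fps_X * (F (j - 1) + (\<Sum>l=j+1..h. F l))"
    and "j \<le> h"
  shows "fps_nth (F j) n = of_nat (card (deutsch_paths_upper h j n))"
  using \<open>j \<le> h\<close>
proof (induction n arbitrary: j)
  case 0
  then show ?case
    using assms(1) by (subst F) (simp_all add: deutsch_paths_upper_0)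
next
  case (Suc n)
  have "fps_nth (F j) (Suc n) = fps_nth (F (j - 1)) n + (\<Sum>l=j+1..h. fps_nth (F l) n)"
    using Suc.prems by (subst F) (simp_all add: fps_sum_nth)
  also have "\<dots> = of_nat (card (deutsch_paths_upper h (j - 1) n))
                   + (\<Sum>l=j+1..h. of_nat (card (deutsch_paths_upper h l n)))"
    using Suc.prems by (simp add: Suc.IH)
  also have "\<dots> = of_nat (card (deutsch_paths_upper h j (Suc n)))"
    using assms(1) Suc.prems by (simp add: card_deutsch_paths_upper_Suc)
  finally show ?case .
qed

lemma power_int_add_1_right_inverse:
  fixes x :: "'a::{monoid_mult, inverse}"
  assumes "x * inverse x = 1"
  shows "x powi (k + 1) = x * x powi k"
proof -
  consider "k \<ge> 0" | "k = -1" | "k < -1"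
    by linarith
  then show ?thesis
  proof cases
    case 1
    then have "nat (k + 1) = Suc (nat k)"
      by simp
    with 1 show ?thesis
      by (simp add: power_int_def)
  next
    case 2
    with assms show ?thesis
      by (simp add: power_int_def)
  next
    case 3
    then have "nat (- k) = Suc (nat (- (k + 1)))"
      by simp
    with 3 assms show ?thesis
      by (simp add: power_int_def mult.assoc[symmetric])
  qed
qed

lemma sum_int_telescope:
  fixes f :: "int \<Rightarrow> 'a::ab_group_add"
  assumes "m \<le> n + 1"
  shows "(\<Sum>l=m..n. f l - f (l + 1)) = f m - f (n + 1)"
  using assms
proof (induction m rule: int_le_induct)
  case base
  then show ?case
    by simp
next
  case (step m)
  then have "{m - 1..n} = insert (m - 1) {m..n}"
    by auto
  with step show ?case
    by simp
qed

lemma power_nat_mult_1_plus: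
  fixes v :: "'a::comm_ring_1"
  shows "v ^ nat m * (1 + v) = v ^ nat (m + 1) + v * v ^ nat (m - 1) + (if m = 0 then 1 - v else 0)"
proof -
  consider "m > 0" | "m = 0" | "m < 0"
    by linarith
  then show ?thesis
  proof cases
    case 1
    then have "nat m = Suc (nat (m - 1))" and "nat (m + 1) = Suc (Suc (nat (m - 1)))"
      by simp_all
    with 1 show ?thesis
      by (simp add: algebra_simps)
  qed simp_all
qed

lemma three_term_recurrence:
  fixes X v c B T :: "'a::comm_ring_1" and m :: int
  assumes Xv: "X * (1 + v + v^2) = v" and c: "c * (1 - v) = 1 + v + v^2"
    and B: "m = 0 \<Longrightarrow> (1 + v)^2 * B = 1"
  defines "s \<equiv> \<lambda>k. c * (v ^ nat k - T) * (1 + v) ^ nat (m + 1 - k) * B"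
  shows "s m - s (m + 1) = (if m = 0 then 1 else 0) + X * (s (m - 1) - s m + s (m + 1))"
proof -
  define q where "q = 1 + v + v^2"
  define W where "W = c * (v ^ nat (m - 1) - T) * B"
  define \<delta> where "\<delta> = (if m = 0 then 1 else 0 :: 'a)"
  \<comment> \<open>k \<mapsto> v ^ nat k is geometric except at k = 0; the defect \<delta> is absorbed by (1 + v)^2 B = 1.\<close>
  have shift: "v ^ nat m * (1 + v) = v ^ nat (m + 1) + v * v ^ nat (m - 1) + \<delta> * (1 - v)"
    by (simp add: \<delta>_def power_nat_mult_1_plus)
  have s_pred: "s (m - 1) = c * (v ^ nat (m - 1) - T) * (1 + v)^2 * B"
    and s_self: "s m = c * (v ^ nat m - T) * (1 + v) * B"
    and s_succ: "s (m + 1) = c * (v ^ nat (m + 1) - T) * B"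
    by (simp_all add: s_def)
  have "s m - s (m + 1) = c * ((v ^ nat m * (1 + v) - v ^ nat (m + 1)) - v * T) * B"
    unfolding s_self s_succ by (simp add: algebra_simps)
  also have "\<dots> = v * W + \<delta> * (c * (1 - v)) * B"
    unfolding shift by (simp add: W_def algebra_simps)
  finally have lhs: "s m - s (m + 1) = v * W + \<delta> * q * B"
    by (simp add: c q_def)
  have "s (m - 1) - s m + s (m + 1) =
          c * ((v ^ nat (m - 1) - T) * (1 + v)^2 - (v ^ nat m * (1 + v) - T * (1 + v))
               + (v ^ nat (m + 1) - T)) * B"
    unfolding s_pred s_self s_succ by (simp add: algebra_simps)
  also have "\<dots> = q * W - \<delta> * (c * (1 - v)) * B"
    unfolding shift by (simp add: W_def q_def algebra_simps power2_eq_square)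
  finally have rhs: "s (m - 1) - s m + s (m + 1) = q * W - \<delta> * q * B"
    by (simp add: c q_def)
  have "\<delta> + X * (q * W - \<delta> * q * B) = \<delta> + (X * q) * W - \<delta> * (X * q) * B"
    by (simp add: algebra_simps)
  also have "\<dots> = \<delta> * ((1 + v)^2 * B) + v * W - \<delta> * v * B"
    using B by (simp add: Xv[folded q_def] \<delta>_def)
  also have "\<dots> = v * W + \<delta> * q * B"
    by (simp add: q_def algebra_simps power2_eq_square)
  finally show ?thesis
    using lhs rhs by (simp add: \<delta>_def)
qed

text \<open>
  The series S_m, i.e. the generating function of the paths ending at a level in {m..h};
  for m \<le> 0 the factor v ^ nat m is 1.
\<close>
definition deutsch_tail_gf :: "'a::field fps \<Rightarrow> int \<Rightarrow> int \<Rightarrow> 'a fps" where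
  "deutsch_tail_gf v h m =
     (1 + v + v^2) * inverse (1 - v) * (v ^ nat m - v ^ nat (h + 1)) * (1 + v) powi (- m - 1)"

lemma deutsch_tail_gf_above: "deutsch_tail_gf v h (h + 1) = 0"
  by (simp add: deutsch_tail_gf_def)

lemma power_int_1_plus_shift:
  fixes v :: "'a::field fps"
  assumes "fps_nth v 0 = 0"
  shows "(1 + v) powi (- m - 1) = (1 + v) * (1 + v) powi (- m - 2)"
    and "(1 + v) powi (- m) = (1 + v)^2 * (1 + v) powi (- m - 2)"
proof -
  have step: "(1 + v) powi (k + 1) = (1 + v) * (1 + v) powi k" for k
    using assms by (intro power_int_add_1_right_inverse inverse_mult_eq_1') simp
  have "(1 + v) powi (- m - 1) = (1 + v) powi ((- m - 2) + 1)"
    by (rule arg_cong[where f = "power_int (1 + v)"]) simp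
  then show succ: "(1 + v) powi (- m - 1) = (1 + v) * (1 + v) powi (- m - 2)"
    by (simp only: step)
  have "(1 + v) powi (- m) = (1 + v) powi ((- m - 1) + 1)"
    by (rule arg_cong[where f = "power_int (1 + v)"]) simp
  then show "(1 + v) powi (- m) = (1 + v)^2 * (1 + v) powi (- m - 2)"
    by (simp only: step succ power2_eq_square mult.assoc)
qed

lemma deutsch_tail_gf_recurrence:
  fixes v :: "'a::field fps" and h m :: int
  assumes v0: "fps_nth v 0 = 0" and Xv: "fps_X * (1 + v + v^2) = v"
  defines "S \<equiv> deutsch_tail_gf v h"
  shows "S m - S (m + 1) = (if m = 0 then 1 else 0) + fps_X * (S (m - 1) - S m + S (m + 1))"
proof -
  define c where "c = (1 + v + v^2) * inverse (1 - v)"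
  define B where "B = (1 + v) powi (- m - 2)"
  have c: "c * (1 - v) = 1 + v + v^2"
    using v0 by (simp add: c_def mult.assoc inverse_mult_eq_1)
  have B: "(1 + v) powi (- m - 1) = (1 + v) * B" "(1 + v) powi (- m) = (1 + v)^2 * B"
    unfolding B_def by (fact power_int_1_plus_shift[OF v0])+
  then have "m = 0 \<Longrightarrow> (1 + v)^2 * B = 1"
    by simp
  note identity = three_term_recurrence[OF Xv c this, where T = "v ^ nat (h + 1)"]
  have "S (m - 1) = c * (v ^ nat (m - 1) - v ^ nat (h + 1)) * (1 + v) ^ nat (m + 1 - (m - 1)) * B"
    and "S m = c * (v ^ nat m - v ^ nat (h + 1)) * (1 + v) ^ nat (m + 1 - m) * B"
    and "S (m + 1) = c * (v ^ nat (m + 1) - v ^ nat (h + 1)) * (1 + v) ^ nat (m + 1 - (m + 1)) * B"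
    by (simp_all add: S_def deutsch_tail_gf_def c_def B_def B diff_diff_eq mult_ac)
  with identity show ?thesis
    by simp
qed

lemma deutsch_tail_gf_diff_neg:
  fixes v :: "'a::field fps"
  assumes v0: "fps_nth v 0 = 0" and "i < 0"
  shows "deutsch_tail_gf v h i - deutsch_tail_gf v h (i + 1) =
           (1 + v) powi (- i - 2) * v * (1 - v ^ nat (h + 1)) * (1 + v + v^2) / (1 - v)"
proof -
  have "fps_nth (1 - v) 0 \<noteq> 0"
    using v0 by simp
  with \<open>i < 0\<close> show ?thesis
    by (simp add: deutsch_tail_gf_def power_int_1_plus_shift(1)[OF v0] fps_divide_unit
        diff_diff_eq algebra_simps)
qed

lemma deutsch_tail_gf_diff_nonneg:
  fixes v :: "'a::field fps"
  assumes v0: "fps_nth v 0 = 0" and "0 \<le> i" and "i \<le> h + 1"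
  shows "deutsch_tail_gf v h i - deutsch_tail_gf v h (i + 1) =
           v ^ nat i * (1 - v ^ nat (2 - i + h)) * (1 + v + v^2) / ((1 - v) * (1 + v) ^ nat (i + 2))"
proof -
  define B where "B = (1 + v) powi (- i - 2)"
  have B_succ: "(1 + v) powi (- i - 1) = (1 + v) * B"
    unfolding B_def by (fact power_int_1_plus_shift(1)[OF v0])
  have B_eq: "B = inverse ((1 + v) ^ nat (i + 2))"
    using \<open>0 \<le> i\<close> by (simp add: B_def power_int_def fps_inverse_power add.commute)
  have v_succ: "v ^ nat (i + 1) = v * v ^ nat i"
    using \<open>0 \<le> i\<close> by (simp add: nat_add_distrib)
  have v_compl: "v ^ nat i * (1 - v ^ nat (2 - i + h)) = v ^ nat i - v * v ^ nat (h + 1)"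
  proof -
    have "nat i + nat (2 - i + h) = Suc (nat (h + 1))"
      using assms(2,3) by simp
    then show ?thesis
      by (metis power_add power_Suc right_diff_distrib mult_1_right)
  qed
  have unit: "fps_nth ((1 - v) * (1 + v) ^ nat (i + 2)) 0 \<noteq> 0"
    using v0 by simp
  have "deutsch_tail_gf v h i - deutsch_tail_gf v h (i + 1) =
          (1 + v + v^2) * inverse (1 - v) * (v ^ nat i - v * v ^ nat (h + 1)) * B"
    by (simp add: deutsch_tail_gf_def B_succ v_succ diff_diff_eq flip: B_def) (simp add: algebra_simps)
  also have "\<dots> = v ^ nat i * (1 - v ^ nat (2 - i + h)) * (1 + v + v^2) / ((1 - v) * (1 + v) ^ nat (i + 2))"
    unfolding fps_divide_unit[OF unit] fps_inverse_mult v_compl B_eq by (simp add: mult_ac)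
  finally show ?thesis .
qed

theorem theorem7:
  fixes h i :: int and v :: "rat fps"
  assumes "h \<ge> 0" and "i \<le> h"
    and "fps_nth v 0 = 0"
    and "fps_X = v / (1 + v + v^2)"
  defines "\<Phi> \<equiv> Abs_fps (\<lambda>n. of_nat (card (deutsch_paths_upper h i n))) :: rat fps"
  shows "(i < 0 \<longrightarrow>
           \<Phi> = (1 + v) powi (- i - 2) * v * (1 - v ^ nat (h + 1)) * (1 + v + v^2) / (1 - v))
       \<and> (0 \<le> i \<longrightarrow>
           \<Phi> = v ^ nat i * (1 - v ^ nat (2 - i + h)) * (1 + v + v^2)
                 / ((1 - v) * (1 + v) ^ nat (i + 2)))"
proof -
  define S where "S = deutsch_tail_gf v h"
  have "fps_nth (1 + v + v^2) 0 \<noteq> 0"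
    using assms(3) by (simp add: power2_eq_square)
  then have Xv: "fps_X * (1 + v + v^2) = v"
    unfolding assms(4) by (simp add: fps_divide_unit mult.assoc inverse_mult_eq_1)
  have rec: "S j - S (j + 1) = (if j = 0 then 1 else 0)
               + fps_X * (S (j - 1) - S (j - 1 + 1) + (\<Sum>l=j+1..h. S l - S (l + 1)))"
    if "j \<le> h" for j
    using that deutsch_tail_gf_recurrence[OF assms(3) Xv, of h j]
    by (simp add: sum_int_telescope S_def deutsch_tail_gf_above)
  have "fps_nth (S i - S (i + 1)) n = of_nat (card (deutsch_paths_upper h i n))" for n
    by (rule fps_nth_eq_card_deutsch_paths_upper[where F = "\<lambda>j. S j - S (j + 1)", OF assms(1) rec assms(2)])
  then have "\<Phi> = S i - S (i + 1)"
    unfolding \<Phi>_def by (intro fps_ext) (simp only: fps_nth_Abs_fps)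
  then show ?thesis
    using assms(1-3) by (simp add: S_def deutsch_tail_gf_diff_neg deutsch_tail_gf_diff_nonneg)
qed

end
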